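(* Let $\widetilde{SL}_2(\mathbb{R})$ be identified with $\mathbb{R}^3_+=\{(x,y,z):z>0\}$ endowed with the metric $ds^2=\left(dx+\frac{dy}{z}\right)^2+\frac{dy^2+dz^2}{z^2}$, and let $\pi:\mathbb{R}^3_+\to\mathbb{H}^2$, $\pi(x,y,z)=(y,z)$, where $\mathbb{H}^2$ is the upper half-plane with metric $\frac{dy^2+dz^2}{z^2}$ (a Riemannian submersion with minimal fibres). Let $\gamma:I\to\mathbb{H}^2$ be a curve parametrised by arc length with signed curvature $k$. Then the cylinder $S=\pi^{-1}(\gamma(I))$ is a biminimal surface with respect to $\lambda$ in $\widetilde{SL}_2(\mathbb{R})$ if and only if $\gamma$ is a biminimal curve with respect to $\lambda+1$ in $\mathbb{H}^2$, i.e. $k''=k^3+(2+\lambda)k$.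
   Context: For a map $\phi$: tension field $\tau(\phi)=\operatorname{trace}\nabla d\phi$, bitension field $\tau_2(\phi)=\sum_i(\nabla^\phi_{e_i}\nabla^\phi_{e_i}-\nabla^\phi_{\nabla_{e_i}e_i})\tau(\phi)+\sum_iR^N(d\phi(e_i),\tau(\phi))d\phi(e_i)$, with $R(X,Y)Z=\nabla_{[X,Y]}Z-\nabla_X\nabla_YZ+\nabla_Y\nabla_XZ$. An immersion is biminimal with respect to $\lambda\in\mathbb{R}$ if $[\tau_2(\phi)]^\perp-\lambda[\tau(\phi)]^\perp=0$ ($\perp$ = normal component). For an arc-length curve on a surface of Gaussian curvature $G$ with signed curvature $k$, biminimality with respect to $\mu$ means $k''-k^3+kG-\mu k=0$ (here $G=-1$). *)

theory Defs
  imports "HOL-Analysis.Analysis"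
begin

text \<open>A Riemannian metric on an open subset of the coordinate space real^'n is given by
  its Gram matrix field  h :: real^'n => real^'n^'n.  Vectors are coordinate vectors.\<close>

definition pd :: "(real^'n \<Rightarrow> real) \<Rightarrow> 'n \<Rightarrow> real^'n \<Rightarrow> real" where
  "pd f i p = deriv (\<lambda>r. f (p + r *\<^sub>R axis i 1)) 0"

definition ip :: "real^'n^'n \<Rightarrow> real^'n \<Rightarrow> real^'n \<Rightarrow> real" where
  "ip H X Y = (\<Sum>i\<in>UNIV. \<Sum>j\<in>UNIV. X $ i * H $ i $ j * Y $ j)"

definition Chr :: "(real^'n \<Rightarrow> real^'n^'n) \<Rightarrow> 'n \<Rightarrow> 'n \<Rightarrow> 'n \<Rightarrow> real^'n \<Rightarrow> real" where
  "Chr h k i j p = (1/2) * (\<Sum>l\<in>UNIV. matrix_inv (h p) $ k $ l *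
      (pd (\<lambda>q. h q $ j $ l) i p + pd (\<lambda>q. h q $ i $ l) j p - pd (\<lambda>q. h q $ i $ j) l p))"

definition nablaN :: "(real^'n \<Rightarrow> real^'n^'n) \<Rightarrow> (real^'n \<Rightarrow> real^'n) \<Rightarrow> (real^'n \<Rightarrow> real^'n)
    \<Rightarrow> real^'n \<Rightarrow> real^'n" where
  "nablaN h X Y p = (\<chi> d. (\<Sum>a\<in>UNIV. X p $ a * pd (\<lambda>q. Y q $ d) a p)
      + (\<Sum>a\<in>UNIV. \<Sum>b\<in>UNIV. Chr h d a b p * X p $ a * Y p $ b))"

definition lie_bracket :: "(real^'n \<Rightarrow> real^'n) \<Rightarrow> (real^'n \<Rightarrow> real^'n) \<Rightarrow> real^'n \<Rightarrow> real^'n" where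
  "lie_bracket X Y p = (\<chi> d. \<Sum>a\<in>UNIV. X p $ a * pd (\<lambda>q. Y q $ d) a p - Y p $ a * pd (\<lambda>q. X q $ d) a p)"

text \<open>Curvature with the paper's sign convention
  R(X,Y)Z = nabla_[X,Y] Z - nabla_X nabla_Y Z + nabla_Y nabla_X Z, evaluated at p on the
  tangent vectors u v w (extended to constant coordinate fields; R is tensorial).\<close>
definition curv_fields :: "(real^'n \<Rightarrow> real^'n^'n) \<Rightarrow> (real^'n \<Rightarrow> real^'n) \<Rightarrow> (real^'n \<Rightarrow> real^'n)
    \<Rightarrow> (real^'n \<Rightarrow> real^'n) \<Rightarrow> real^'n \<Rightarrow> real^'n" where
  "curv_fields h X Y Z p = nablaN h (lie_bracket X Y) Z p - nablaN h X (nablaN h Y Z) p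
      + nablaN h Y (nablaN h X Z) p"

definition curv :: "(real^'n \<Rightarrow> real^'n^'n) \<Rightarrow> real^'n \<Rightarrow> real^'n \<Rightarrow> real^'n \<Rightarrow> real^'n \<Rightarrow> real^'n" where
  "curv h p u v w = curv_fields h (\<lambda>_. u) (\<lambda>_. v) (\<lambda>_. w) p"

definition dphi :: "(real^'m \<Rightarrow> real^'n) \<Rightarrow> 'm \<Rightarrow> real^'m \<Rightarrow> real^'n" where
  "dphi \<phi> a u = (\<chi> c. pd (\<lambda>v. \<phi> v $ c) a u)"

definition induced :: "(real^'n \<Rightarrow> real^'n^'n) \<Rightarrow> (real^'m \<Rightarrow> real^'n) \<Rightarrow> real^'m \<Rightarrow> real^'m^'m" where
  "induced h \<phi> u = (\<chi> i j. ip (h (\<phi> u)) (dphi \<phi> i u) (dphi \<phi> j u))"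

definition covD :: "(real^'n \<Rightarrow> real^'n^'n) \<Rightarrow> (real^'m \<Rightarrow> real^'n) \<Rightarrow> (real^'m \<Rightarrow> real^'n)
    \<Rightarrow> 'm \<Rightarrow> real^'m \<Rightarrow> real^'n" where
  "covD h \<phi> V a u = (\<chi> c. pd (\<lambda>v. V v $ c) a u
      + (\<Sum>\<alpha>\<in>UNIV. \<Sum>\<beta>\<in>UNIV. Chr h c \<alpha> \<beta> (\<phi> u) * pd (\<lambda>v. \<phi> v $ \<alpha>) a u * V u $ \<beta>))"

definition tension :: "(real^'n \<Rightarrow> real^'n^'n) \<Rightarrow> (real^'m \<Rightarrow> real^'n) \<Rightarrow> real^'m \<Rightarrow> real^'n" where
  "tension h \<phi> u = (\<Sum>i\<in>UNIV. \<Sum>j\<in>UNIV. matrix_inv (induced h \<phi> u) $ i $ j *\<^sub>R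
      (covD h \<phi> (dphi \<phi> j) i u - (\<Sum>k\<in>UNIV. Chr (induced h \<phi>) k i j u *\<^sub>R dphi \<phi> k u)))"

definition bitension :: "(real^'n \<Rightarrow> real^'n^'n) \<Rightarrow> (real^'m \<Rightarrow> real^'n) \<Rightarrow> real^'m \<Rightarrow> real^'n" where
  "bitension h \<phi> u = (let \<tau> = tension h \<phi>; g = induced h \<phi> in
     (\<Sum>i\<in>UNIV. \<Sum>j\<in>UNIV. matrix_inv (g u) $ i $ j *\<^sub>R
       (covD h \<phi> (\<lambda>v. covD h \<phi> \<tau> j v) i u
        - (\<Sum>k\<in>UNIV. Chr g k i j u *\<^sub>R covD h \<phi> \<tau> k u)
        + curv h (\<phi> u) (dphi \<phi> i u) (\<tau> u) (dphi \<phi> j u))))"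

definition normal_part :: "(real^'n \<Rightarrow> real^'n^'n) \<Rightarrow> (real^'m \<Rightarrow> real^'n) \<Rightarrow> real^'m \<Rightarrow> real^'n \<Rightarrow> real^'n" where
  "normal_part h \<phi> u w = w - (\<Sum>i\<in>UNIV. \<Sum>j\<in>UNIV. (matrix_inv (induced h \<phi> u) $ i $ j
       * ip (h (\<phi> u)) w (dphi \<phi> i u)) *\<^sub>R dphi \<phi> j u)"

definition biminimal_on :: "(real^'n \<Rightarrow> real^'n^'n) \<Rightarrow> real \<Rightarrow> (real^'m \<Rightarrow> real^'n) \<Rightarrow> (real^'m) set \<Rightarrow> bool" where
  "biminimal_on h lam \<phi> U \<longleftrightarrow> (\<forall>u\<in>U.
      normal_part h \<phi> u (bitension h \<phi> u) - lam *\<^sub>R normal_part h \<phi> u (tension h \<phi> u) = 0)"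

text \<open>SL2~ as R^3_+ with coordinates (x,y,z) = (v$1,v$2,v$3) and metric
  (dx + dy/z)^2 + (dy^2 + dz^2)/z^2.\<close>
definition sl2_metric :: "real^3 \<Rightarrow> real^3^3" where
  "sl2_metric p = (let z = p $ 3 in
     vector [vector [1, 1/z, 0], vector [1/z, 2/z^2, 0], vector [0, 0, 1/z^2]])"

text \<open>H^2 as upper half plane with coordinates (y,z) = (w$1,w$2) and metric (dy^2+dz^2)/z^2.\<close>
definition hyp_metric :: "real^2 \<Rightarrow> real^2^2" where
  "hyp_metric p = (let z = p $ 2 in vector [vector [1/z^2, 0], vector [0, 1/z^2]])"

definition proj_H :: "real^3 \<Rightarrow> real^2" where
  "proj_H p = vector [p $ 2, p $ 3]"

definition smooth_curve_on :: "real set \<Rightarrow> (real \<Rightarrow> real^2) \<Rightarrow> bool" where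
  "smooth_curve_on I \<gamma> \<longleftrightarrow> (\<forall>c n. \<forall>t\<in>I. (deriv ^^ n) (\<lambda>s. \<gamma> s $ c) differentiable (at t))"

definition vel :: "(real \<Rightarrow> real^2) \<Rightarrow> real \<Rightarrow> real^2" where
  "vel \<gamma> t = (\<chi> c. deriv (\<lambda>s. \<gamma> s $ c) t)"

definition covD_curve :: "(real^2 \<Rightarrow> real^2^2) \<Rightarrow> (real \<Rightarrow> real^2) \<Rightarrow> (real \<Rightarrow> real^2) \<Rightarrow> real \<Rightarrow> real^2" where
  "covD_curve h \<gamma> V t = (\<chi> c. deriv (\<lambda>s. V s $ c) t
      + (\<Sum>a\<in>UNIV. \<Sum>b\<in>UNIV. Chr h c a b (\<gamma> t) * vel \<gamma> t $ a * V t $ b))"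

text \<open>Positively oriented unit normal: rotation of the unit tangent by +pi/2
  (the hyperbolic metric is conformal to the Euclidean one).\<close>
definition rot90 :: "real^2 \<Rightarrow> real^2" where
  "rot90 v = vector [- v $ 2, v $ 1]"

definition signed_curvature :: "(real \<Rightarrow> real^2) \<Rightarrow> real \<Rightarrow> real" where
  "signed_curvature \<gamma> t = ip (hyp_metric (\<gamma> t)) (covD_curve hyp_metric \<gamma> (vel \<gamma>) t) (rot90 (vel \<gamma> t))"

definition arclength_param_on :: "real set \<Rightarrow> (real \<Rightarrow> real^2) \<Rightarrow> bool" where
  "arclength_param_on I \<gamma> \<longleftrightarrow> (\<forall>t\<in>I. ip (hyp_metric (\<gamma> t)) (vel \<gamma> t) (vel \<gamma> t) = 1)"

text \<open>The vertical cylinder pi^{-1}(gamma(I)) parametrised by (t,x) |-> (x, gamma t),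
  defined on {u. u$1 in I} (u$1 = t the curve parameter, u$2 = x the fibre coordinate).\<close>
definition cylinder :: "(real \<Rightarrow> real^2) \<Rightarrow> real^2 \<Rightarrow> real^3" where
  "cylinder \<gamma> u = vector [u $ 2, \<gamma> (u $ 1) $ 1, \<gamma> (u $ 1) $ 2]"

end

theory Submission
  imports Defs
begin

text \<open>
  Write \<open>\<gamma>' = z (a, b)\<close>; unit hyperbolic speed means \<open>a\<^sup>2 + b\<^sup>2 = 1\<close>, and then
  \<open>a' = -b (\<kappa> - a)\<close>, \<open>b' = a (\<kappa> - a)\<close>, \<open>z' = z b\<close>. Along the cylinder
  \<open>\<phi>(t, x) = (x, \<gamma> t)\<close> take the frame \<open>P = \<partial>\<^sub>t\<phi> = (0, z a, z b)\<close>,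
  \<open>E = \<partial>\<^sub>x\<phi> = (1, 0, 0)\<close> and the unit normal \<open>N = (b, -z b, z a)\<close>. In frame
  coordinates the Levi-Civita connection of SL2 along the cylinder is a first-order operator whose
  coefficients are polynomials in \<open>a, b, \<kappa>\<close>, so every step reduces to a polynomial identity
  modulo \<open>a\<^sup>2 + b\<^sup>2 = 1\<close>. One finds \<open>\<tau> = \<kappa> N\<close> and
  \<open>\<tau>\<^sub>2 = (\<kappa>'' - \<kappa>\<^sup>3 - 2\<kappa>) N - 3\<kappa>\<kappa>' P + (3a\<kappa> - 1)\<kappa>' E\<close>, where the curvature
  term contributes \<open>-3\<kappa>/2 N\<close> (SL2 has sectional curvature \<open>-7/4\<close> on horizontal and
  \<open>1/4\<close> on vertical planes). Hence the normal part of \<open>\<tau>\<^sub>2 - \<lambda>\<tau>\<close> is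
  \<open>(\<kappa>'' - \<kappa>\<^sup>3 - (2 + \<lambda>)\<kappa>) N\<close>, and \<open>N\<close> never vanishes.
\<close>

section \<open>Metrics depending on a single coordinate\<close>

lemma cases_3: fixes x :: 3 obtains "x = 1" | "x = 2" | "x = 3"
  using exhaust_3 by blast

lemma cases_2: fixes x :: 2 obtains "x = 1" | "x = 2"
  using exhaust_2 by blast

lemma pd_const: "pd (\<lambda>q. c) i p = 0"
  by (simp add: pd_def)

lemma pd_fun_of_coordinate:
  fixes F :: "real^'n \<Rightarrow> real"
  assumes "open S" "p $ i \<in> S" "\<And>v. v $ i \<in> S \<Longrightarrow> F v = g (v $ i)"
  shows "pd F i p = deriv g (p $ i)"
proof -
  have "((\<lambda>r. p $ i + r) \<longlongrightarrow> p $ i) (nhds 0)"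
    by (auto intro!: tendsto_eq_intros simp: filterlim_ident)
  then have "eventually (\<lambda>r. p $ i + r \<in> S) (nhds 0)"
    using assms(1,2) topological_tendstoD by fastforce
  then have "eventually (\<lambda>r. F (p + r *\<^sub>R axis i 1) = (g \<circ> (\<lambda>r. p $ i + r)) r) (nhds 0)"
    by eventually_elim (simp add: assms(3) axis_def)
  then show ?thesis
    unfolding pd_def deriv_shift_0[of g] by (rule deriv_cong_ev) simp
qed

lemma pd_fun_of_other_coordinate:
  fixes F :: "real^'n \<Rightarrow> real"
  assumes "\<And>v. v $ i \<in> S \<Longrightarrow> F v = g (v $ i)" "p $ i \<in> S" "j \<noteq> i"
  shows "pd F j p = 0"
proof -
  have "(\<lambda>r. F (p + r *\<^sub>R axis j 1)) = (\<lambda>r. g (p $ i))"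
    using assms by (auto simp: axis_def)
  then show ?thesis by (simp add: pd_def)
qed

lemma matrix_inv_unique:
  fixes A B :: "real^'n^'n"
  assumes "A ** B = mat 1" "B ** A = mat 1"
  shows "matrix_inv A = B"
  unfolding matrix_inv_def
proof (rule some_equality)
  fix C assume C: "A ** C = mat 1 \<and> C ** A = mat 1"
  have "C = C ** (A ** B)" using assms by simp
  also have "\<dots> = B" using C by (simp add: matrix_mul_assoc)
  finally show "C = B" .
qed (use assms in auto)

lemma Chr_metric_of_one_coordinate:
  fixes h :: "real^'n \<Rightarrow> real^'n^'n"
  assumes "open S" "p $ m \<in> S" "\<And>q. q $ m \<in> S \<Longrightarrow> h q = M (q $ m)"
    and "\<And>j l. DERIV (\<lambda>s. M s $ j $ l) (p $ m) :> M' $ j $ l"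
    and "M (p $ m) ** Minv = mat 1" "Minv ** M (p $ m) = mat 1"
  shows "Chr h k i j p = 1/2 * (\<Sum>l\<in>UNIV. Minv $ k $ l *
     ((if i = m then M' $ j $ l else 0) + (if j = m then M' $ i $ l else 0)
      - (if l = m then M' $ i $ j else 0)))"
proof -
  have "pd (\<lambda>q. h q $ j $ l) i p = (if i = m then M' $ j $ l else 0)" for i j l
  proof (cases "i = m")
    case True
    then have "pd (\<lambda>q. h q $ j $ l) i p = deriv (\<lambda>s. M s $ j $ l) (p $ m)"
      using assms(1-3) pd_fun_of_coordinate[of S p m _ "\<lambda>s. M s $ j $ l"] by simp
    then show ?thesis using True DERIV_imp_deriv[OF assms(4)] by simp
  next
    case False
    then show ?thesis
      using assms(2,3) pd_fun_of_other_coordinate[of m S _ "\<lambda>s. M s $ j $ l" p i] by simp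
  qed
  moreover have "matrix_inv (h p) = Minv"
    using assms(2,3,5,6) by (simp add: matrix_inv_unique)
  ultimately show ?thesis unfolding Chr_def by simp
qed

section \<open>The metrics of SL2 and of the hyperbolic plane\<close>

definition sl2_gram :: "real \<Rightarrow> real^3^3" where
  "sl2_gram z = vector [vector [1, 1/z, 0], vector [1/z, 2/z^2, 0], vector [0, 0, 1/z^2]]"

definition sl2_gram_deriv :: "real \<Rightarrow> real^3^3" where
  "sl2_gram_deriv z =
     vector [vector [0, -1/z^2, 0], vector [-1/z^2, -4/z^3, 0], vector [0, 0, -2/z^3]]"

definition sl2_gram_inv :: "real \<Rightarrow> real^3^3" where
  "sl2_gram_inv z = vector [vector [2, -z, 0], vector [-z, z^2, 0], vector [0, 0, z^2]]"

definition sl2_chr :: "real \<Rightarrow> real^3^3^3" where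
  "sl2_chr z = vector [
     vector [vector [0, 0, 1/(2*z)], vector [0, 0, 1/z^2], vector [1/(2*z), 1/z^2, 0]],
     vector [vector [0, 0, -1/2], vector [0, 0, -3/(2*z)], vector [-1/2, -3/(2*z), 0]],
     vector [vector [0, 1/2, 0], vector [1/2, 2/z, 0], vector [0, 0, -1/z]]]"

definition sl2_chr_deriv :: "real \<Rightarrow> real^3^3^3" where
  "sl2_chr_deriv z = vector [
     vector [vector [0, 0, -1/(2*z^2)], vector [0, 0, -2/z^3], vector [-1/(2*z^2), -2/z^3, 0]],
     vector [vector [0, 0, 0], vector [0, 0, 3/(2*z^2)], vector [0, 3/(2*z^2), 0]],
     vector [vector [0, 0, 0], vector [0, -2/z^2, 0], vector [0, 0, 1/z^2]]]"

lemma sl2_metric_eq_gram: "sl2_metric p = sl2_gram (p $ 3)"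
  by (simp add: sl2_metric_def sl2_gram_def Let_def)

lemma DERIV_sl2_gram:
  "z \<noteq> 0 \<Longrightarrow> DERIV (\<lambda>z. sl2_gram z $ i $ j) z :> sl2_gram_deriv z $ i $ j"
  by (cases i rule: cases_3; cases j rule: cases_3)
    (auto simp: sl2_gram_def sl2_gram_deriv_def power2_eq_square power3_eq_cube field_simps
      intro!: derivative_eq_intros)

lemma sl2_gram_inverse:
  "z \<noteq> 0 \<Longrightarrow> sl2_gram z ** sl2_gram_inv z = mat 1 \<and> sl2_gram_inv z ** sl2_gram z = mat 1"
  by (simp add: sl2_gram_def sl2_gram_inv_def matrix_matrix_mult_def mat_def vec_eq_iff
      forall_3 sum_3 field_simps power2_eq_square)

lemma Chr_sl2_metric: "p $ 3 \<noteq> 0 \<Longrightarrow> Chr sl2_metric k i j p = sl2_chr (p $ 3) $ k $ i $ j"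
  apply (subst Chr_metric_of_one_coordinate[where S="-{0}" and m=3 and M=sl2_gram
        and M'="sl2_gram_deriv (p $ 3)" and Minv="sl2_gram_inv (p $ 3)"])
  apply (auto simp: open_Compl sl2_metric_eq_gram DERIV_sl2_gram sl2_gram_inverse)[6]
  apply (cases k rule: cases_3; cases i rule: cases_3; cases j rule: cases_3)
  apply (simp_all add: sum_3 sl2_gram_inv_def sl2_gram_deriv_def sl2_chr_def
      field_simps power2_eq_square power3_eq_cube)
  done

lemma DERIV_sl2_chr:
  "z \<noteq> 0 \<Longrightarrow> DERIV (\<lambda>z. sl2_chr z $ k $ i $ j) z :> sl2_chr_deriv z $ k $ i $ j"
  by (cases k rule: cases_3; cases i rule: cases_3; cases j rule: cases_3)
    (auto simp: sl2_chr_def sl2_chr_deriv_def power2_eq_square power3_eq_cube field_simps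
      intro!: derivative_eq_intros)

definition chr_apply :: "real^3^3^3 \<Rightarrow> real^3 \<Rightarrow> real^3 \<Rightarrow> real^3" where
  "chr_apply T X Y = (\<chi> c. \<Sum>a\<in>UNIV. \<Sum>b\<in>UNIV. T $ c $ a $ b * X $ a * Y $ b)"

lemma DERIV_chr_apply_sl2_chr:
  "z \<noteq> 0 \<Longrightarrow> DERIV (\<lambda>z. chr_apply (sl2_chr z) X Y $ c) z :> chr_apply (sl2_chr_deriv z) X Y $ c"
  unfolding chr_apply_def vec_lambda_beta
  by (intro DERIV_sum DERIV_cmult_right[where c="Y $ _"] DERIV_cmult_right[where c="X $ _"]
        DERIV_sl2_chr | simp add: mult.commute mult.left_commute)+

lemma nablaN_sl2_const:
  "q $ 3 \<noteq> 0 \<Longrightarrow> nablaN sl2_metric (\<lambda>_. X) (\<lambda>_. Y) q = chr_apply (sl2_chr (q $ 3)) X Y"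
  by (simp add: nablaN_def pd_const chr_apply_def Chr_sl2_metric mult.assoc mult.left_commute)

lemma nablaN_sl2_nablaN_const:
  assumes "p $ 3 \<noteq> 0"
  shows "nablaN sl2_metric (\<lambda>_. X) (nablaN sl2_metric (\<lambda>_. Y) (\<lambda>_. W)) p
    = X $ 3 *\<^sub>R chr_apply (sl2_chr_deriv (p $ 3)) Y W
      + chr_apply (sl2_chr (p $ 3)) X (chr_apply (sl2_chr (p $ 3)) Y W)"
proof -
  define V where "V = nablaN sl2_metric (\<lambda>_. Y) (\<lambda>_. W)"
  have V: "q $ 3 \<in> -{0} \<Longrightarrow> V q $ d = chr_apply (sl2_chr (q $ 3)) Y W $ d" for q d
    by (simp add: V_def nablaN_sl2_const)
  have pd_V: "pd (\<lambda>q. V q $ d) a p =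
      (if a = 3 then chr_apply (sl2_chr_deriv (p $ 3)) Y W $ d else 0)" for a d
  proof (cases "a = 3")
    case True
    have "pd (\<lambda>q. V q $ d) 3 p = deriv (\<lambda>z. chr_apply (sl2_chr z) Y W $ d) (p $ 3)"
      using assms V by (intro pd_fun_of_coordinate[where S="-{0}"]) (auto simp: open_Compl)
    then show ?thesis
      using True DERIV_imp_deriv[OF DERIV_chr_apply_sl2_chr[OF assms]] by simp
  next
    case False
    then show ?thesis
      using assms V pd_fun_of_other_coordinate[of 3 "-{0}" "\<lambda>q. V q $ d" _ p a] by simp
  qed
  have V_p: "V p = chr_apply (sl2_chr (p $ 3)) Y W"
    using assms by (simp add: V_def nablaN_sl2_const)
  show ?thesis
    unfolding V_def[symmetric] nablaN_def[of _ _ V] pd_V V_p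
    by (simp add: vec_eq_iff assms chr_apply_def Chr_sl2_metric if_distrib cong: if_cong)
qed

lemma curv_sl2_metric:
  assumes "p $ 3 \<noteq> 0"
  shows "curv sl2_metric p X Y W =
    (Y $ 3 *\<^sub>R chr_apply (sl2_chr_deriv (p $ 3)) X W
      + chr_apply (sl2_chr (p $ 3)) Y (chr_apply (sl2_chr (p $ 3)) X W))
    - (X $ 3 *\<^sub>R chr_apply (sl2_chr_deriv (p $ 3)) Y W
      + chr_apply (sl2_chr (p $ 3)) X (chr_apply (sl2_chr (p $ 3)) Y W))"
proof -
  have "lie_bracket (\<lambda>_. X) (\<lambda>_. Y) = (\<lambda>_. 0)"
    by (simp add: lie_bracket_def pd_const fun_eq_iff vec_eq_iff)
  moreover have "nablaN sl2_metric (\<lambda>_. 0) Z p = 0" for Z :: "real^3 \<Rightarrow> real^3"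
    by (simp add: nablaN_def vec_eq_iff)
  ultimately show ?thesis
    unfolding curv_def curv_fields_def by (simp add: nablaN_sl2_nablaN_const[OF assms])
qed

definition hyp_gram :: "real \<Rightarrow> real^2^2" where
  "hyp_gram z = vector [vector [1/z^2, 0], vector [0, 1/z^2]]"

definition hyp_gram_deriv :: "real \<Rightarrow> real^2^2" where
  "hyp_gram_deriv z = vector [vector [-2/z^3, 0], vector [0, -2/z^3]]"

definition hyp_gram_inv :: "real \<Rightarrow> real^2^2" where
  "hyp_gram_inv z = vector [vector [z^2, 0], vector [0, z^2]]"

definition hyp_chr :: "real \<Rightarrow> real^2^2^2" where
  "hyp_chr z = vector [vector [vector [0, -1/z], vector [-1/z, 0]],
                       vector [vector [1/z, 0], vector [0, -1/z]]]"

lemma hyp_metric_eq_gram: "hyp_metric p = hyp_gram (p $ 2)"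
  by (simp add: hyp_metric_def hyp_gram_def Let_def)

lemma DERIV_hyp_gram:
  "z \<noteq> 0 \<Longrightarrow> DERIV (\<lambda>z. hyp_gram z $ i $ j) z :> hyp_gram_deriv z $ i $ j"
  by (cases i rule: cases_2; cases j rule: cases_2)
    (auto simp: hyp_gram_def hyp_gram_deriv_def power2_eq_square power3_eq_cube field_simps
      intro!: derivative_eq_intros)

lemma hyp_gram_inverse:
  "z \<noteq> 0 \<Longrightarrow> hyp_gram z ** hyp_gram_inv z = mat 1 \<and> hyp_gram_inv z ** hyp_gram z = mat 1"
  by (simp add: hyp_gram_def hyp_gram_inv_def matrix_matrix_mult_def mat_def vec_eq_iff
      forall_2 sum_2 field_simps power2_eq_square)

lemma Chr_hyp_metric: "p $ 2 \<noteq> 0 \<Longrightarrow> Chr hyp_metric k i j p = hyp_chr (p $ 2) $ k $ i $ j"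
  apply (subst Chr_metric_of_one_coordinate[where S="-{0}" and m=2 and M=hyp_gram
        and M'="hyp_gram_deriv (p $ 2)" and Minv="hyp_gram_inv (p $ 2)"])
  apply (auto simp: open_Compl hyp_metric_eq_gram DERIV_hyp_gram hyp_gram_inverse)[6]
  apply (cases k rule: cases_2; cases i rule: cases_2; cases j rule: cases_2)
  apply (simp_all add: sum_2 hyp_gram_inv_def hyp_gram_deriv_def hyp_chr_def
      field_simps power2_eq_square power3_eq_cube)
  done

section \<open>Unit speed curves in the hyperbolic plane\<close>

locale unit_speed_curve =
  fixes I :: "real set" and \<gamma> :: "real \<Rightarrow> real^2"
  assumes open_I: "open I" and height_pos: "\<forall>t\<in>I. \<gamma> t $ 2 > 0"
    and smooth: "smooth_curve_on I \<gamma>" and unit_speed: "arclength_param_on I \<gamma>"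
begin

definition y :: "nat \<Rightarrow> real \<Rightarrow> real" where "y n = (deriv ^^ n) (\<lambda>s. \<gamma> s $ 1)"
definition z :: "nat \<Rightarrow> real \<Rightarrow> real" where "z n = (deriv ^^ n) (\<lambda>s. \<gamma> s $ 2)"

definition a :: "real \<Rightarrow> real" where "a t = y 1 t / z 0 t"
definition b :: "real \<Rightarrow> real" where "b t = z 1 t / z 0 t"

abbreviation \<kappa> :: "real \<Rightarrow> real" where "\<kappa> \<equiv> signed_curvature \<gamma>"

lemma y_differentiable: "t \<in> I \<Longrightarrow> y n differentiable (at t)"
  using smooth by (simp add: smooth_curve_on_def y_def)

lemma z_differentiable: "t \<in> I \<Longrightarrow> z n differentiable (at t)"
  using smooth by (simp add: smooth_curve_on_def z_def)

lemma DERIV_y: "t \<in> I \<Longrightarrow> DERIV (y n) t :> y (Suc n) t"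
  using y_differentiable by (simp add: y_def DERIV_deriv_iff_real_differentiable)

lemma DERIV_z: "t \<in> I \<Longrightarrow> DERIV (z n) t :> z (Suc n) t"
  using z_differentiable by (simp add: z_def DERIV_deriv_iff_real_differentiable)

lemma deriv_y: "deriv (y n) = y (Suc n)"
  by (simp add: y_def)

lemma deriv_z: "deriv (z n) = z (Suc n)"
  by (simp add: z_def)

lemma gamma_2_eq: "\<gamma> t $ 2 = z 0 t"
  by (simp add: z_def)

lemma z_neq_0: "t \<in> I \<Longrightarrow> z 0 t \<noteq> 0"
  using height_pos by (auto simp: z_def)

lemma vel_eq: "vel \<gamma> t = vector [y 1 t, z 1 t]"
  by (simp add: vel_def vec_eq_iff forall_2 y_def z_def)

lemma unit_speed_eq: "t \<in> I \<Longrightarrow> y 1 t ^ 2 + z 1 t ^ 2 = z 0 t ^ 2"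
proof -
  assume t: "t \<in> I"
  then have "ip (hyp_metric (\<gamma> t)) (vel \<gamma> t) (vel \<gamma> t) = 1"
    using unit_speed by (simp add: arclength_param_on_def)
  then have "y 1 t ^ 2 / z 0 t ^ 2 + z 1 t ^ 2 / z 0 t ^ 2 = 1"
    by (simp add: ip_def sum_2 hyp_metric_eq_gram hyp_gram_def vel_eq power2_eq_square z_def)
  then show ?thesis using z_neq_0[OF t] by (simp add: field_simps)
qed

lemma a_sq_plus_b_sq: "t \<in> I \<Longrightarrow> a t ^ 2 + b t ^ 2 = 1"
  using unit_speed_eq[of t] z_neq_0[of t] by (simp add: a_def b_def field_simps)

lemma unit_speed_eq_deriv: "t \<in> I \<Longrightarrow> y 1 t * y 2 t + z 1 t * z 2 t = z 0 t * z 1 t"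
proof -
  assume t: "t \<in> I"
  have "DERIV (\<lambda>s. y 1 s ^ 2 + z 1 s ^ 2 - z 0 s ^ 2) t :>
      2 * (y 1 t * y 2 t + z 1 t * z 2 t - z 0 t * z 1 t)"
    by (rule derivative_eq_intros DERIV_y[OF t] DERIV_z[OF t] refl)+
      (simp add: algebra_simps numeral_2_eq_2)
  moreover have "DERIV (\<lambda>s. y 1 s ^ 2 + z 1 s ^ 2 - z 0 s ^ 2) t :> 0"
    by (rule has_field_derivative_transform_within_open[where f="\<lambda>_. 0", OF DERIV_const open_I t])
      (metis unit_speed_eq diff_self)
  ultimately show ?thesis using DERIV_unique by fastforce
qed

lemma signed_curvature_eq:
  assumes t: "t \<in> I"
  shows "\<kappa> t = (y 1 t * z 2 t - z 1 t * y 2 t) / z 0 t ^ 2 + a t"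
proof -
  note z = z_neq_0[OF t]
  have "(\<lambda>s. vel \<gamma> s $ 1) = y 1" "(\<lambda>s. vel \<gamma> s $ 2) = z 1"
    by (simp_all add: vel_eq fun_eq_iff)
  then have "\<kappa> t = ((y 2 t - 2 * y 1 t * z 1 t / z 0 t) * (- z 1 t)
      + (z 2 t + (y 1 t ^ 2 - z 1 t ^ 2) / z 0 t) * y 1 t) / z 0 t ^ 2"
    using z
    by (simp add: signed_curvature_def covD_curve_def ip_def sum_2 hyp_metric_eq_gram
        hyp_gram_def Chr_hyp_metric hyp_chr_def rot90_def vel_eq gamma_2_eq deriv_y deriv_z
        field_simps power2_eq_square numeral_2_eq_2)
  also have "\<dots> = (y 1 t * z 2 t - z 1 t * y 2 t) / z 0 t ^ 2
      + y 1 t * (y 1 t ^ 2 + z 1 t ^ 2) / z 0 t ^ 3"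
    using z by (simp add: field_simps power2_eq_square power3_eq_cube)
  finally show ?thesis
    using z unit_speed_eq[OF t] by (simp add: a_def power2_eq_square power3_eq_cube)
qed

lemma DERIV_z_0: "t \<in> I \<Longrightarrow> DERIV (z 0) t :> z 0 t * b t"
  using DERIV_z[of t 0] z_neq_0[of t] by (simp add: b_def)

lemma DERIV_a: "t \<in> I \<Longrightarrow> DERIV a t :> - b t * (\<kappa> t - a t)"
proof -
  assume t: "t \<in> I"
  note z = z_neq_0[OF t]
  have "DERIV a t :> (y 2 t * z 0 t - y 1 t * z 1 t) / z 0 t ^ 2"
    unfolding a_def[abs_def] using DERIV_y[OF t, of 1] DERIV_z[OF t, of 0]
    by (auto intro!: derivative_eq_intros simp: z power2_eq_square numeral_2_eq_2)
  moreover have "(y 2 t * z 0 t - y 1 t * z 1 t) / z 0 t ^ 2 = - b t * (\<kappa> t - a t)"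
    using z unit_speed_eq[OF t] unit_speed_eq_deriv[OF t]
    by (simp add: signed_curvature_eq[OF t] b_def field_simps power2_eq_square) algebra
  ultimately show ?thesis by simp
qed

lemma DERIV_b: "t \<in> I \<Longrightarrow> DERIV b t :> a t * (\<kappa> t - a t)"
proof -
  assume t: "t \<in> I"
  note z = z_neq_0[OF t]
  have "DERIV b t :> (z 2 t * z 0 t - z 1 t * z 1 t) / z 0 t ^ 2"
    unfolding b_def[abs_def] using DERIV_z[OF t, of 1] DERIV_z[OF t, of 0]
    by (auto intro!: derivative_eq_intros simp: z power2_eq_square numeral_2_eq_2)
  moreover have "(z 2 t * z 0 t - z 1 t * z 1 t) / z 0 t ^ 2 = a t * (\<kappa> t - a t)"
    using z unit_speed_eq[OF t] unit_speed_eq_deriv[OF t]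
    by (simp add: signed_curvature_eq[OF t] a_def field_simps power2_eq_square) algebra
  ultimately show ?thesis by simp
qed

lemma signed_curvature_twice_differentiable:
  assumes t: "t \<in> I"
  shows "DERIV \<kappa> t :> deriv \<kappa> t" "DERIV (deriv \<kappa>) t :> deriv (deriv \<kappa>) t"
proof -
  define K where "K s = (y 1 s * z 2 s - z 1 s * y 2 s) / z 0 s ^ 2 + y 1 s / z 0 s" for s
  define K' where "K' s = (y 1 s * z 3 s - z 1 s * y 3 s) / z 0 s ^ 2
    - 2 * z 1 s * (y 1 s * z 2 s - z 1 s * y 2 s) / z 0 s ^ 3
    + (y 2 s * z 0 s - y 1 s * z 1 s) / z 0 s ^ 2" for s
  have DERIV_K: "DERIV K s :> K' s" if s: "s \<in> I" for s
  proof -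
    note z = z_neq_0[OF s]
    show ?thesis
      unfolding K_def[abs_def]
      apply (rule derivative_eq_intros DERIV_y[OF s] DERIV_z[OF s] refl | simp add: z)+
      apply (simp add: K'_def z field_simps power2_eq_square power3_eq_cube
          numeral_2_eq_2 numeral_3_eq_3)
      by algebra
  qed
  have DERIV_\<kappa>: "DERIV \<kappa> s :> K' s" if "s \<in> I" for s
    by (rule has_field_derivative_transform_within_open[OF DERIV_K[OF that] open_I that])
      (simp add: K_def signed_curvature_eq a_def)
  then show "DERIV \<kappa> t :> deriv \<kappa> t"
    using t DERIV_imp_deriv by fastforce
  have "K' differentiable (at t)"
    using z_neq_0[OF t] unfolding K'_def[abs_def]
    by (intro derivative_intros y_differentiable[OF t] z_differentiable[OF t]) auto
  then have "DERIV K' t :> deriv K' t"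
    by (simp add: DERIV_deriv_iff_real_differentiable)
  moreover have "deriv \<kappa> s = K' s" if "s \<in> I" for s
    using DERIV_\<kappa>[OF that] by (rule DERIV_imp_deriv)
  ultimately show "DERIV (deriv \<kappa>) t :> deriv (deriv \<kappa>) t"
    using has_field_derivative_transform_within_open[OF _ open_I t] DERIV_imp_deriv by metis
qed

section \<open>The moving frame along the vertical cylinder\<close>

definition P :: "real \<Rightarrow> real^3" where "P t = vector [0, z 0 t * a t, z 0 t * b t]"
definition E :: "real^3" where "E = vector [1, 0, 0]"
definition N :: "real \<Rightarrow> real^3" where "N t = vector [b t, - z 0 t * b t, z 0 t * a t]"

definition frame :: "real \<Rightarrow> real \<Rightarrow> real \<Rightarrow> real \<Rightarrow> real^3" where
  "frame t \<alpha> \<beta> \<nu> = \<alpha> *\<^sub>R P t + \<beta> *\<^sub>R E + \<nu> *\<^sub>R N t"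

lemma frame_eq_vector:
  "frame t \<alpha> \<beta> \<nu> = vector [\<beta> + \<nu> * b t, z 0 t * (\<alpha> * a t - \<nu> * b t), z 0 t * (\<alpha> * b t + \<nu> * a t)]"
  by (simp add: frame_def P_def E_def N_def vec_eq_iff forall_3 algebra_simps)

lemma frame_add:
  "frame t \<alpha> \<beta> \<nu> + frame t \<alpha>' \<beta>' \<nu>' = frame t (\<alpha> + \<alpha>') (\<beta> + \<beta>') (\<nu> + \<nu>')"
  by (simp add: frame_def algebra_simps)

lemma frame_diff:
  "frame t \<alpha> \<beta> \<nu> - frame t \<alpha>' \<beta>' \<nu>' = frame t (\<alpha> - \<alpha>') (\<beta> - \<beta>') (\<nu> - \<nu>')"
  by (simp add: frame_def algebra_simps)

lemma frame_scaleR: "c *\<^sub>R frame t \<alpha> \<beta> \<nu> = frame t (c * \<alpha>) (c * \<beta>) (c * \<nu>)"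
  by (simp add: frame_def algebra_simps)

lemma frame_eqI: "\<alpha> = \<alpha>' \<Longrightarrow> \<beta> = \<beta>' \<Longrightarrow> \<nu> = \<nu>' \<Longrightarrow> frame t \<alpha> \<beta> \<nu> = frame t \<alpha>' \<beta>' \<nu>'"
  by simp

lemma N_neq_0: "t \<in> I \<Longrightarrow> N t \<noteq> 0"
  using a_sq_plus_b_sq[of t] z_neq_0[of t] by (auto simp: N_def vec_eq_iff forall_3)

lemma chr_P_frame:
  assumes "t \<in> I"
  shows "chr_apply (sl2_chr (z 0 t)) (P t) (frame t \<alpha> \<beta> \<nu>) =
    frame t (- b t * \<alpha> - 3 / 2 * a t * \<nu>) ((1 + a t ^ 2) / 2 * \<nu>) (2 * a t * \<alpha> + \<beta> / 2 - b t * \<nu>)"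
  using z_neq_0[OF assms] a_sq_plus_b_sq[OF assms]
  by (simp add: frame_eq_vector chr_apply_def sl2_chr_def P_def vec_eq_iff forall_3 sum_3
      field_simps power2_eq_square) algebra

lemma chr_E_frame:
  assumes "t \<in> I"
  shows "chr_apply (sl2_chr (z 0 t)) E (frame t \<alpha> \<beta> \<nu>) = frame t (- \<nu> / 2) (a t * \<nu> / 2) (\<alpha> / 2)"
  using z_neq_0[OF assms] a_sq_plus_b_sq[OF assms]
  by (simp add: frame_eq_vector chr_apply_def sl2_chr_def E_def vec_eq_iff forall_3 sum_3
      field_simps power2_eq_square)

lemma DERIV_frame:
  assumes t: "t \<in> I"
    and "DERIV \<alpha> t :> \<alpha>'" "DERIV \<beta> t :> \<beta>'" "DERIV \<nu> t :> \<nu>'"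
  shows "DERIV (\<lambda>s. frame s (\<alpha> s) (\<beta> s) (\<nu> s) $ c) t :>
    frame t (\<alpha>' + b t * \<alpha> t - (\<kappa> t - a t) * \<nu> t)
      (\<beta>' - b t * (\<kappa> t - a t) * \<alpha> t + (a t * (\<kappa> t - a t) - b t ^ 2) * \<nu> t)
      (\<nu>' + (\<kappa> t - a t) * \<alpha> t + b t * \<nu> t) $ c"
  using DERIV_z_0[OF t] DERIV_a[OF t] DERIV_b[OF t] assms(2-4)
  by (cases c rule: cases_3)
    (auto simp: frame_eq_vector algebra_simps power2_eq_square intro!: derivative_eq_intros)

lemma cylinder_nth:
  "cylinder \<gamma> v $ 1 = v $ 2" "cylinder \<gamma> v $ 2 = y 0 (v $ 1)" "cylinder \<gamma> v $ 3 = z 0 (v $ 1)"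
  by (simp_all add: cylinder_def y_def z_def)

lemma dphi_cylinder_1: "v $ 1 \<in> I \<Longrightarrow> dphi (cylinder \<gamma>) 1 v = frame (v $ 1) 1 0 0"
proof -
  assume v: "v $ 1 \<in> I"
  have "pd (\<lambda>v. cylinder \<gamma> v $ 1) 1 v = 0"
    using pd_fun_of_other_coordinate[of 2 UNIV "\<lambda>v. cylinder \<gamma> v $ 1" "\<lambda>x. x"]
    by (simp add: cylinder_nth)
  moreover have "pd (\<lambda>v. cylinder \<gamma> v $ 2) 1 v = y 1 (v $ 1)"
    using pd_fun_of_coordinate[of UNIV v 1 "\<lambda>v. cylinder \<gamma> v $ 2" "y 0"]
    by (simp add: cylinder_nth deriv_y)
  moreover have "pd (\<lambda>v. cylinder \<gamma> v $ 3) 1 v = z 1 (v $ 1)"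
    using pd_fun_of_coordinate[of UNIV v 1 "\<lambda>v. cylinder \<gamma> v $ 3" "z 0"]
    by (simp add: cylinder_nth deriv_z)
  ultimately show ?thesis
    using z_neq_0[OF v] by (simp add: dphi_def frame_eq_vector vec_eq_iff forall_3 a_def b_def)
qed

lemma dphi_cylinder_2: "dphi (cylinder \<gamma>) 2 v = frame (v $ 1) 0 1 0"
proof -
  have "pd (\<lambda>v. cylinder \<gamma> v $ 1) 2 v = 1"
    using pd_fun_of_coordinate[of UNIV v 2 "\<lambda>v. cylinder \<gamma> v $ 1" "\<lambda>x. x"]
    by (simp add: cylinder_nth)
  moreover have "pd (\<lambda>v. cylinder \<gamma> v $ 2) 2 v = 0"
    using pd_fun_of_other_coordinate[of 1 UNIV "\<lambda>v. cylinder \<gamma> v $ 2" "y 0"]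
    by (simp add: cylinder_nth)
  moreover have "pd (\<lambda>v. cylinder \<gamma> v $ 3) 2 v = 0"
    using pd_fun_of_other_coordinate[of 1 UNIV "\<lambda>v. cylinder \<gamma> v $ 3" "z 0"]
    by (simp add: cylinder_nth)
  ultimately show ?thesis
    by (simp add: dphi_def frame_eq_vector vec_eq_iff forall_3)
qed

lemma covD_cylinder_1:
  assumes u: "u $ 1 = t" "t \<in> I" and V: "\<And>v. v $ 1 \<in> I \<Longrightarrow> V v = W (v $ 1)"
    and W': "\<And>c. DERIV (\<lambda>s. W s $ c) t :> W' $ c"
  shows "covD sl2_metric (cylinder \<gamma>) V 1 u = W' + chr_apply (sl2_chr (z 0 t)) (P t) (W t)"
proof -
  have "pd (\<lambda>v. V v $ c) 1 u = W' $ c" for c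
    using pd_fun_of_coordinate[OF open_I, of u 1 "\<lambda>v. V v $ c" "\<lambda>s. W s $ c"] u V
      DERIV_imp_deriv[OF W']
    by simp
  moreover have "pd (\<lambda>v. cylinder \<gamma> v $ c) 1 u = P t $ c" for c
    using dphi_cylinder_1[of u] u by (simp add: dphi_def vec_eq_iff frame_def)
  ultimately show ?thesis
    using z_neq_0[OF u(2)] u V
    by (simp add: covD_def vec_eq_iff Chr_sl2_metric cylinder_nth chr_apply_def mult.assoc)
qed

lemma covD_cylinder_2:
  assumes u: "u $ 1 = t" "t \<in> I" and V: "\<And>v. v $ 1 \<in> I \<Longrightarrow> V v = W (v $ 1)"
  shows "covD sl2_metric (cylinder \<gamma>) V 2 u = chr_apply (sl2_chr (z 0 t)) E (W t)"
proof -
  have "pd (\<lambda>v. V v $ c) 2 u = 0" for c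
    using pd_fun_of_other_coordinate[of 1 I "\<lambda>v. V v $ c" "\<lambda>s. W s $ c" u 2] u V by simp
  moreover have "pd (\<lambda>v. cylinder \<gamma> v $ c) 2 u = E $ c" for c
    using dphi_cylinder_2[of u] by (simp add: dphi_def vec_eq_iff frame_def)
  ultimately show ?thesis
    using z_neq_0[OF u(2)] u V
    by (simp add: covD_def vec_eq_iff Chr_sl2_metric cylinder_nth chr_apply_def mult.assoc)
qed

lemma covD_frame_1:
  assumes u: "u $ 1 = t" "t \<in> I"
    and V: "\<And>v. v $ 1 \<in> I \<Longrightarrow> V v = frame (v $ 1) (\<alpha> (v $ 1)) (\<beta> (v $ 1)) (\<nu> (v $ 1))"
    and D: "DERIV \<alpha> t :> \<alpha>'" "DERIV \<beta> t :> \<beta>'" "DERIV \<nu> t :> \<nu>'"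
  shows "covD sl2_metric (cylinder \<gamma>) V 1 u =
    frame t (\<alpha>' - (\<kappa> t + a t / 2) * \<nu> t)
      (\<beta>' - b t * (\<kappa> t - a t) * \<alpha> t + (a t * \<kappa> t + (a t ^ 2 - 1) / 2) * \<nu> t)
      (\<nu>' + (\<kappa> t + a t) * \<alpha> t + \<beta> t / 2)" (is "_ = ?rhs")
proof -
  have "covD sl2_metric (cylinder \<gamma>) V 1 u =
      frame t (\<alpha>' + b t * \<alpha> t - (\<kappa> t - a t) * \<nu> t)
        (\<beta>' - b t * (\<kappa> t - a t) * \<alpha> t + (a t * (\<kappa> t - a t) - b t ^ 2) * \<nu> t)
        (\<nu>' + (\<kappa> t - a t) * \<alpha> t + b t * \<nu> t)
      + chr_apply (sl2_chr (z 0 t)) (P t) (frame t (\<alpha> t) (\<beta> t) (\<nu> t))"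
    by (rule covD_cylinder_1[OF u, where W="\<lambda>s. frame s (\<alpha> s) (\<beta> s) (\<nu> s)"])
      (use V DERIV_frame[OF u(2) D] in auto)
  also have "\<dots> = ?rhs"
    unfolding chr_P_frame[OF u(2)] frame_add
    using a_sq_plus_b_sq[OF u(2)]
    by (intro frame_eqI) (simp_all add: algebra_simps power2_eq_square)
  finally show ?thesis .
qed

lemma covD_frame_2:
  assumes u: "u $ 1 = t" "t \<in> I"
    and V: "\<And>v. v $ 1 \<in> I \<Longrightarrow> V v = frame (v $ 1) (\<alpha> (v $ 1)) (\<beta> (v $ 1)) (\<nu> (v $ 1))"
  shows "covD sl2_metric (cylinder \<gamma>) V 2 u = frame t (- \<nu> t / 2) (a t * \<nu> t / 2) (\<alpha> t / 2)"
  using covD_cylinder_2[OF u, where W="\<lambda>s. frame s (\<alpha> s) (\<beta> s) (\<nu> s)"] V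
  by (simp add: chr_E_frame[OF u(2)])

lemma ip_frame:
  assumes "t \<in> I"
  shows "ip (sl2_gram (z 0 t)) (frame t \<alpha> \<beta> \<nu>) (frame t \<alpha>' \<beta>' \<nu>') =
    (1 + a t ^ 2) * \<alpha> * \<alpha>' + a t * (\<alpha> * \<beta>' + \<beta> * \<alpha>') + \<beta> * \<beta>' + \<nu> * \<nu>'"
  using z_neq_0[OF assms] a_sq_plus_b_sq[OF assms]
  by (simp add: ip_def sum_3 sl2_gram_def frame_eq_vector field_simps power2_eq_square) algebra

definition cyl_gram :: "real \<Rightarrow> real^2^2" where
  "cyl_gram t = vector [vector [1 + a t ^ 2, a t], vector [a t, 1]]"

definition cyl_gram_inv :: "real \<Rightarrow> real^2^2" where
  "cyl_gram_inv t = vector [vector [1, - a t], vector [- a t, 1 + a t ^ 2]]"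

lemma induced_cylinder: "v $ 1 \<in> I \<Longrightarrow> induced sl2_metric (cylinder \<gamma>) v = cyl_gram (v $ 1)"
  by (simp add: induced_def vec_eq_iff forall_2 sl2_metric_eq_gram cylinder_nth ip_frame
      dphi_cylinder_1 dphi_cylinder_2 cyl_gram_def)

lemma cyl_gram_inverse:
  "cyl_gram t ** cyl_gram_inv t = mat 1 \<and> cyl_gram_inv t ** cyl_gram t = mat 1"
  by (simp add: cyl_gram_def cyl_gram_inv_def matrix_matrix_mult_def mat_def vec_eq_iff
      forall_2 sum_2 algebra_simps power2_eq_square)

lemma matrix_inv_induced_cylinder:
  "v $ 1 \<in> I \<Longrightarrow> matrix_inv (induced sl2_metric (cylinder \<gamma>) v) = cyl_gram_inv (v $ 1)"
  by (simp add: induced_cylinder cyl_gram_inverse matrix_inv_unique)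

lemma Chr_induced_cylinder:
  assumes u: "u $ 1 = t" "t \<in> I"
  shows "Chr (induced sl2_metric (cylinder \<gamma>)) i j l u =
    (if i = 2 \<and> j = 1 \<and> l = 1 then - b t * (\<kappa> t - a t) else 0)"
proof -
  define a' where "a' = - b t * (\<kappa> t - a t)"
  define G' :: "real^2^2" where "G' = vector [vector [2 * a t * a', a'], vector [a', 0]]"
  have "DERIV (\<lambda>s. cyl_gram s $ j $ l) t :> G' $ j $ l" for j l
    using DERIV_a[OF u(2)]
    by (cases j rule: cases_2; cases l rule: cases_2)
      (auto simp: cyl_gram_def G'_def a'_def intro!: derivative_eq_intros)
  then have "Chr (induced sl2_metric (cylinder \<gamma>)) i j l u =
    1/2 * (\<Sum>r\<in>UNIV. cyl_gram_inv t $ i $ r *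
     ((if j = 1 then G' $ l $ r else 0) + (if l = 1 then G' $ j $ r else 0)
      - (if r = 1 then G' $ j $ l else 0)))"
    using u open_I
    by (intro Chr_metric_of_one_coordinate[where S=I and M=cyl_gram])
      (auto simp: induced_cylinder cyl_gram_inverse)
  then show ?thesis
    by (cases i rule: cases_2; cases j rule: cases_2; cases l rule: cases_2)
      (simp_all add: sum_2 cyl_gram_inv_def G'_def a'_def algebra_simps power2_eq_square)
qed

lemma normal_part_cylinder:
  assumes u: "u $ 1 = t" "t \<in> I"
  shows "normal_part sl2_metric (cylinder \<gamma>) u (frame t \<alpha> \<beta> \<nu>) = frame t 0 0 \<nu>"
  using u
  by (simp add: normal_part_def matrix_inv_induced_cylinder sum_2 sl2_metric_eq_gram cylinder_nth
      ip_frame dphi_cylinder_1 dphi_cylinder_2 cyl_gram_inv_def frame_scaleR frame_add frame_diff)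
    (intro frame_eqI; simp add: algebra_simps power2_eq_square)

section \<open>Tension and bitension of the vertical cylinder\<close>

lemma tension_cylinder:
  assumes u: "u $ 1 = t" "t \<in> I"
  shows "tension sl2_metric (cylinder \<gamma>) u = frame t 0 0 (\<kappa> t)"
proof -
  have "covD sl2_metric (cylinder \<gamma>) (dphi (cylinder \<gamma>) 1) 1 u =
      frame t 0 (- b t * (\<kappa> t - a t)) (\<kappa> t + a t)"
    using covD_frame_1[OF u, of _ "\<lambda>_. 1" "\<lambda>_. 0" "\<lambda>_. 0" 0 0 0] dphi_cylinder_1 by simp
  moreover have "covD sl2_metric (cylinder \<gamma>) (dphi (cylinder \<gamma>) 2) 1 u = frame t 0 0 (1 / 2)"
    using covD_frame_1[OF u, of _ "\<lambda>_. 0" "\<lambda>_. 1" "\<lambda>_. 0" 0 0 0] dphi_cylinder_2 by simp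
  moreover have "covD sl2_metric (cylinder \<gamma>) (dphi (cylinder \<gamma>) 1) 2 u = frame t 0 0 (1 / 2)"
    using covD_frame_2[OF u, of _ "\<lambda>_. 1" "\<lambda>_. 0" "\<lambda>_. 0"] dphi_cylinder_1 by simp
  moreover have "covD sl2_metric (cylinder \<gamma>) (dphi (cylinder \<gamma>) 2) 2 u = frame t 0 0 0"
    using covD_frame_2[OF u, of _ "\<lambda>_. 0" "\<lambda>_. 1" "\<lambda>_. 0"] dphi_cylinder_2 by simp
  ultimately show ?thesis
    using u
    by (simp add: tension_def matrix_inv_induced_cylinder cyl_gram_inv_def sum_2
        Chr_induced_cylinder dphi_cylinder_1 dphi_cylinder_2 frame_scaleR frame_add frame_diff)
qed

lemma covD_tension_cylinder:
  assumes u: "u $ 1 = t" "t \<in> I"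
  shows "covD sl2_metric (cylinder \<gamma>) (tension sl2_metric (cylinder \<gamma>)) 1 u =
      frame t (- \<kappa> t * (\<kappa> t + a t / 2)) (\<kappa> t * (a t * \<kappa> t + (a t ^ 2 - 1) / 2)) (deriv \<kappa> t)"
    and "covD sl2_metric (cylinder \<gamma>) (tension sl2_metric (cylinder \<gamma>)) 2 u =
      frame t (- \<kappa> t / 2) (a t * \<kappa> t / 2) 0"
  using covD_frame_1[OF u, of _ "\<lambda>_. 0" "\<lambda>_. 0" \<kappa> 0 0 "deriv \<kappa> t"]
    covD_frame_2[OF u, of _ "\<lambda>_. 0" "\<lambda>_. 0" \<kappa>]
    tension_cylinder signed_curvature_twice_differentiable(1)[OF u(2)]
  by (simp_all add: algebra_simps)

lemma curv_cylinder_frame: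
  assumes t: "t \<in> I" and p: "p $ 3 = z 0 t"
  shows "curv sl2_metric p (frame t 1 0 0) (frame t 0 0 c) (frame t 1 0 0) =
      frame t 0 0 (c * (a t ^ 2 - 7) / 4)"
    and "curv sl2_metric p (frame t 1 0 0) (frame t 0 0 c) (frame t 0 1 0) =
      frame t 0 0 (c * a t / 4)"
    and "curv sl2_metric p (frame t 0 1 0) (frame t 0 0 c) (frame t 1 0 0) =
      frame t 0 0 (c * a t / 4)"
    and "curv sl2_metric p (frame t 0 1 0) (frame t 0 0 c) (frame t 0 1 0) =
      frame t 0 0 (c / 4)"
  by (simp_all add: p curv_sl2_metric chr_apply_def sl2_chr_def sl2_chr_deriv_def frame_eq_vector
      vec_eq_iff forall_3 sum_3 z_neq_0[OF t] field_simps power2_eq_square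
      power3_eq_cube)
    (use a_sq_plus_b_sq[OF t] in algebra)

lemma bitension_cylinder:
  assumes u: "u $ 1 = t" "t \<in> I"
  shows "bitension sl2_metric (cylinder \<gamma>) u =
    frame t (- 3 * \<kappa> t * deriv \<kappa> t) ((3 * a t * \<kappa> t - 1) * deriv \<kappa> t)
      (deriv (deriv \<kappa>) t - \<kappa> t ^ 3 - 2 * \<kappa> t)"
proof -
  let ?\<phi> = "cylinder \<gamma>"
  let ?\<tau> = "tension sl2_metric ?\<phi>"
  define a' where "a' = - b t * (\<kappa> t - a t)"
  define \<alpha>\<^sub>1 where "\<alpha>\<^sub>1 s = - \<kappa> s * (\<kappa> s + a s / 2)" for s
  define \<beta>\<^sub>1 where "\<beta>\<^sub>1 s = \<kappa> s * (a s * \<kappa> s + (a s ^ 2 - 1) / 2)" for s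
  define \<alpha>\<^sub>2 where "\<alpha>\<^sub>2 s = - \<kappa> s / 2" for s
  define \<beta>\<^sub>2 where "\<beta>\<^sub>2 s = a s * \<kappa> s / 2" for s
  note D = DERIV_a[OF u(2), folded a'_def] signed_curvature_twice_differentiable[OF u(2)]
  have V\<^sub>1: "covD sl2_metric ?\<phi> ?\<tau> 1 v =
      frame (v $ 1) (\<alpha>\<^sub>1 (v $ 1)) (\<beta>\<^sub>1 (v $ 1)) (deriv \<kappa> (v $ 1))"
    and V\<^sub>2: "covD sl2_metric ?\<phi> ?\<tau> 2 v = frame (v $ 1) (\<alpha>\<^sub>2 (v $ 1)) (\<beta>\<^sub>2 (v $ 1)) 0"
    if "v $ 1 \<in> I" for v
    using covD_tension_cylinder[OF refl that] by (simp_all add: \<alpha>\<^sub>1_def \<beta>\<^sub>1_def \<alpha>\<^sub>2_def \<beta>\<^sub>2_def)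
  have "DERIV \<alpha>\<^sub>1 t :> - (deriv \<kappa> t * (\<kappa> t + a t / 2) + \<kappa> t * (deriv \<kappa> t + a' / 2))"
    and "DERIV \<beta>\<^sub>1 t :> deriv \<kappa> t * (a t * \<kappa> t + (a t ^ 2 - 1) / 2)
      + \<kappa> t * (a' * \<kappa> t + a t * deriv \<kappa> t + a t * a')"
    and "DERIV \<alpha>\<^sub>2 t :> - deriv \<kappa> t / 2"
    and "DERIV \<beta>\<^sub>2 t :> (a' * \<kappa> t + a t * deriv \<kappa> t) / 2"
    unfolding \<alpha>\<^sub>1_def[abs_def] \<beta>\<^sub>1_def[abs_def] \<alpha>\<^sub>2_def[abs_def] \<beta>\<^sub>2_def[abs_def]
    using D by (auto intro!: derivative_eq_intros simp: field_simps power2_eq_square)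
  note covD\<^sub>1 = covD_frame_1[OF u V\<^sub>1 this(1,2) D(3)] covD_frame_1[OF u V\<^sub>2 this(3,4) DERIV_const]
  note covD\<^sub>2 = covD_frame_2[OF u V\<^sub>1] covD_frame_2[OF u V\<^sub>2]
  show ?thesis
    using u a_sq_plus_b_sq[OF u(2)]
    by (simp add: bitension_def Let_def matrix_inv_induced_cylinder cyl_gram_inv_def sum_2
        covD\<^sub>1 covD\<^sub>2 covD_tension_cylinder Chr_induced_cylinder dphi_cylinder_1 dphi_cylinder_2
        tension_cylinder curv_cylinder_frame cylinder_nth frame_scaleR frame_add frame_diff)
      (intro frame_eqI; simp add: \<alpha>\<^sub>1_def \<beta>\<^sub>1_def \<alpha>\<^sub>2_def \<beta>\<^sub>2_def a'_def
          field_simps power2_eq_square power3_eq_cube; algebra)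
qed

lemma biminimal_cylinder_iff:
  "biminimal_on sl2_metric lam (cylinder \<gamma>) {u. u $ 1 \<in> I} \<longleftrightarrow>
    (\<forall>t\<in>I. deriv (deriv \<kappa>) t = \<kappa> t ^ 3 + (2 + lam) * \<kappa> t)"
proof -
  have normal_eq: "normal_part sl2_metric (cylinder \<gamma>) u (bitension sl2_metric (cylinder \<gamma>) u)
      - lam *\<^sub>R normal_part sl2_metric (cylinder \<gamma>) u (tension sl2_metric (cylinder \<gamma>) u)
    = (deriv (deriv \<kappa>) (u $ 1) - \<kappa> (u $ 1) ^ 3 - (2 + lam) * \<kappa> (u $ 1)) *\<^sub>R N (u $ 1)"
    if "u $ 1 \<in> I" for u
    using that
    by (simp add: bitension_cylinder tension_cylinder normal_part_cylinder frame_scaleR frame_diff)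
      (simp add: frame_def algebra_simps)
  have "biminimal_on sl2_metric lam (cylinder \<gamma>) {u. u $ 1 \<in> I} \<longleftrightarrow>
      (\<forall>u :: real^2. u $ 1 \<in> I \<longrightarrow>
        deriv (deriv \<kappa>) (u $ 1) - \<kappa> (u $ 1) ^ 3 - (2 + lam) * \<kappa> (u $ 1) = 0)"
    unfolding biminimal_on_def by (simp add: normal_eq N_neq_0)
  also have "\<dots> \<longleftrightarrow> (\<forall>t\<in>I. deriv (deriv \<kappa>) t - \<kappa> t ^ 3 - (2 + lam) * \<kappa> t = 0)"
    by (metis vector_2(1))
  also have "\<dots> \<longleftrightarrow> (\<forall>t\<in>I. deriv (deriv \<kappa>) t = \<kappa> t ^ 3 + (2 + lam) * \<kappa> t)"
    by (simp add: algebra_simps)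
  finally show ?thesis .
qed

end

theorem proposition5p3:
  fixes I :: "real set" and \<gamma> :: "real \<Rightarrow> real^2" and lam :: real
  assumes "open I" and "is_interval I" and "I \<noteq> {}"
    and "\<forall>t\<in>I. \<gamma> t $ 2 > 0"
    and "smooth_curve_on I \<gamma>"
    and "arclength_param_on I \<gamma>"
  shows "biminimal_on sl2_metric lam (cylinder \<gamma>) {u. u $ 1 \<in> I}
     \<longleftrightarrow> (\<forall>t\<in>I. deriv (deriv (signed_curvature \<gamma>)) t
              = (signed_curvature \<gamma> t) ^ 3 + (2 + lam) * signed_curvature \<gamma> t)"
proof -
  interpret unit_speed_curve I \<gamma>
    using assms by unfold_locales auto
  show ?thesis by (rule biminimal_cylinder_iff)
qed

end
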